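(* Let $H=(V_1,\dots,V_d,E)$ be a finite $d$-partite hypergraph with $E\neq\emptyset$, and let $W_j\subseteq V_j$ for $j=1,\dots,d$. Then for every $i=1,\dots,d$, \[ disc_H(W_1,\dots,W_d)\leq disc_{B_i}\big(W_i,E_i(W_1,\dots,W_d)\big)+\frac{|W_i|}{|V_i|}\,disc_{H_i}(W_1,\dots,W_{i-1},W_{i+1},\dots,W_d). \]
   Context: A $d$-partite hypergraph $H=(V_1,\dots,V_d,E)$ has vertex set $V_1\sqcup\dots\sqcup V_d$ and edges $E\subseteq\prod_{i=1}^dV_i$ (each edge is a $d$-set with exactly one vertex in each $V_i$). For $W_j\subseteq V_j$, $E(W_1,\dots,W_d)=E\cap\prod_j W_j$ and $disc_H(W_1,\dots,W_d)=\left|\frac{|E(W_1,\dots,W_d)|}{|E|}-\prod_{j=1}^d\frac{|W_j|}{|V_j|}\right|$. For each $i$, $E_i=\{e\setminus\{v\}: e\in E,\ v\in e\cap V_i\}$ (walls of cotype $i$), $H_i=(V_1,\dots,V_{i-1},V_{i+1},\dots,V_d,E_i)$ is the induced $(d-1)$-partite hypergraph, $E_i(W_1,\dots,W_d)=E_i\cap\prod_{j\ne i}W_j$, and $disc_{H_i}(W_1,\dots,W_{i-1},W_{i+1},\dots,W_d)=\left|\frac{|E_i(W_1,\dots,W_d)|}{|E_i|}-\prod_{j\ne i}\frac{|W_j|}{|V_j|}\right|$. $B_i$ is the bipartite graph with vertex sides $V_i$ and $E_i$, where $v\in V_i$ and $Y\in E_i$ are adjacent iff $\{v\}\cup Y\in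 E$; its edge set is $E_{B_i}$. For a bipartite graph with sides $V,V'$ and edge set $E'$, and $S\subseteq V$, $T\subseteq V'$, $disc(S,T)=\left|\frac{|E'(S,T)|}{|E'|}-\frac{|S|}{|V|}\frac{|T|}{|V'|}\right|$. *)

theory Defs
  imports Complex_Main "HOL-Library.FuncSet"
begin

text \<open>A partite hypergraph on index set I: vertex classes V j (j in I), edges are
  tuples e in PiE I V (exactly one vertex in each class).\<close>

definition hdisc :: "nat set \<Rightarrow> (nat \<Rightarrow> 'a set) \<Rightarrow> (nat \<Rightarrow> 'a) set \<Rightarrow> (nat \<Rightarrow> 'a set) \<Rightarrow> real" where
  "hdisc I V E W = \<bar>real (card (E \<inter> PiE I W)) / real (card E)
                     - (\<Prod>j\<in>I. real (card (W j)) / real (card (V j)))\<bar>"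

definition walls :: "nat \<Rightarrow> (nat \<Rightarrow> 'a) set \<Rightarrow> nat \<Rightarrow> (nat \<Rightarrow> 'a) set" where
  "walls d E i = (\<lambda>e. restrict e ({1..d} - {i})) ` E"

definition bip_edges :: "nat \<Rightarrow> (nat \<Rightarrow> 'a set) \<Rightarrow> (nat \<Rightarrow> 'a) set \<Rightarrow> nat \<Rightarrow> ('a \<times> (nat \<Rightarrow> 'a)) set" where
  "bip_edges d V E i = {(v, Y). v \<in> V i \<and> Y \<in> walls d E i \<and> Y(i := v) \<in> E}"

definition bdisc :: "'a set \<Rightarrow> 'b set \<Rightarrow> ('a \<times> 'b) set \<Rightarrow> 'a set \<Rightarrow> 'b set \<Rightarrow> real" where
  "bdisc A B F S T = \<bar>real (card (F \<inter> S \<times> T)) / real (card F)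
                       - real (card S) / real (card A) * (real (card T) / real (card B))\<bar>"

end

theory Submission
  imports Defs
begin

text \<open>Splitting an edge e into its i-th vertex and its wall identifies E with the edge set of
  B_i, and E(W_1,...,W_d) with the edges of B_i between W_i and E_i(W). So disc_H and
  disc_{B_i} compare the same density |E(W)|/|E| with |W_i|/|V_i| times, respectively, the
  product of the |W_j|/|V_j| over j \<noteq> i and the density |E_i(W)|/|E_i|; the bound is the
  triangle inequality between these two.\<close>

lemma PiE_restrict_upd_self:
  assumes "e \<in> PiE I V" "i \<in> I"
  shows "(restrict e (I - {i}))(i := e i) = e"
proof
  fix x show "((restrict e (I - {i}))(i := e i)) x = e x"
    using assms by (cases "x = i") (auto simp: PiE_def extensional_def)
qed

lemma restrict_PiE_remove_iff:
  assumes "e \<in> PiE I V" "i \<in> I"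
  shows "e \<in> PiE I W \<longleftrightarrow> e i \<in> W i \<and> restrict e (I - {i}) \<in> PiE (I - {i}) W"
proof
  assume "e i \<in> W i \<and> restrict e (I - {i}) \<in> PiE (I - {i}) W"
  then show "e \<in> PiE I W"
    using assms by (auto simp: PiE_def Pi_def extensional_def split: if_splits)
qed (use assms in auto)

lemma bij_betw_bip_edges:
  assumes "E \<subseteq> PiE {1..d} V" "i \<in> {1..d}"
  shows "bij_betw (\<lambda>e. (e i, restrict e ({1..d} - {i}))) E (bip_edges d V E i)"
    (is "bij_betw ?f E _")
proof (rule bij_betw_imageI)
  show "inj_on ?f E"
  proof (rule inj_onI)
    fix x y assume "x \<in> E" "y \<in> E" "?f x = ?f y"
    then show "x = y"
      using PiE_restrict_upd_self[of x _ V i] PiE_restrict_upd_self[of y _ V i] assms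
      by (metis (no_types, lifting) prod.inject subsetD)
  qed
  show "?f ` E = bip_edges d V E i"
  proof
    show "?f ` E \<subseteq> bip_edges d V E i"
      using assms PiE_restrict_upd_self[of _ "{1..d}" V i]
      by (fastforce simp: bip_edges_def walls_def)
    show "bip_edges d V E i \<subseteq> ?f ` E"
    proof
      fix p assume "p \<in> bip_edges d V E i"
      then obtain v Y where p: "p = (v, Y)" "Y \<in> walls d E i" "Y(i := v) \<in> E"
        unfolding bip_edges_def by auto
      then have "restrict (Y(i := v)) ({1..d} - {i}) = Y"
        by (auto simp: walls_def restrict_def)
      with p show "p \<in> ?f ` E" by (auto intro!: image_eqI[where x = "Y(i := v)"])
    qed
  qed
qed

lemma card_bip_edges: "E \<subseteq> PiE {1..d} V \<Longrightarrow> i \<in> {1..d} \<Longrightarrow> card (bip_edges d V E i) = card E"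
  using bij_betw_same_card[OF bij_betw_bip_edges] by metis

lemma card_bip_edges_Times_walls:
  assumes "E \<subseteq> PiE {1..d} V" "i \<in> {1..d}"
  shows "card (bip_edges d V E i \<inter> W i \<times> (walls d E i \<inter> PiE ({1..d} - {i}) W))
    = card (E \<inter> PiE {1..d} W)"
proof -
  let ?f = "\<lambda>e. (e i, restrict e ({1..d} - {i}))"
  let ?T = "W i \<times> (walls d E i \<inter> PiE ({1..d} - {i}) W)"
  have bij: "bij_betw ?f E (bip_edges d V E i)"
    using bij_betw_bip_edges[OF assms] .
  have "e \<in> PiE {1..d} W \<longleftrightarrow> ?f e \<in> ?T" if "e \<in> E" for e
    using that assms restrict_PiE_remove_iff[of e "{1..d}" V i W]
    by (auto simp: walls_def)
  then have "E \<inter> PiE {1..d} W = {e \<in> E. ?f e \<in> ?T}"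
    by blast
  moreover have "bip_edges d V E i \<inter> ?T = ?f ` {e \<in> E. ?f e \<in> ?T}"
    unfolding bij_betw_imp_surj_on[OF bij, symmetric] by blast
  moreover have "inj_on ?f {e \<in> E. ?f e \<in> ?T}"
    using bij_betw_imp_inj_on[OF bij] by (rule inj_on_subset) blast
  ultimately show ?thesis
    by (simp add: card_image)
qed

lemma abs_diff_mult_le:
  fixes x a q t :: real
  assumes "a \<ge> 0"
  shows "\<bar>x - a * q\<bar> \<le> \<bar>x - a * t\<bar> + a * \<bar>t - q\<bar>"
proof -
  have "\<bar>x - a * q\<bar> \<le> \<bar>x - a * t\<bar> + \<bar>a * t - a * q\<bar>" by linarith
  also have "\<bar>a * t - a * q\<bar> = a * \<bar>t - q\<bar>"
    using assms by (simp add: abs_mult right_diff_distrib[symmetric])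
  finally show ?thesis .
qed

theorem lemma3p5:
  fixes d :: nat and V W :: "nat \<Rightarrow> 'a set" and E :: "(nat \<Rightarrow> 'a) set" and i :: nat
  assumes "\<And>j. j \<in> {1..d} \<Longrightarrow> finite (V j)"
    and "E \<subseteq> PiE {1..d} V"
    and "E \<noteq> {}"
    and "\<And>j. j \<in> {1..d} \<Longrightarrow> W j \<subseteq> V j"
    and "i \<in> {1..d}"
  shows "hdisc {1..d} V E W
    \<le> bdisc (V i) (walls d E i) (bip_edges d V E i) (W i) (walls d E i \<inter> PiE ({1..d} - {i}) W)
       + real (card (W i)) / real (card (V i)) * hdisc ({1..d} - {i}) V (walls d E i) W"
proof -
  let ?r = "\<lambda>j. real (card (W j)) / real (card (V j))"
  let ?T = "walls d E i \<inter> PiE ({1..d} - {i}) W"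
  have "(\<Prod>j\<in>{1..d}. ?r j) = ?r i * (\<Prod>j\<in>{1..d} - {i}. ?r j)"
    using assms(5) by (simp add: prod.remove)
  then have "hdisc {1..d} V E W
      = \<bar>real (card (E \<inter> PiE {1..d} W)) / real (card E) - ?r i * (\<Prod>j\<in>{1..d} - {i}. ?r j)\<bar>"
    unfolding hdisc_def by simp
  also have "\<dots> \<le> \<bar>real (card (E \<inter> PiE {1..d} W)) / real (card E)
                     - ?r i * (real (card ?T) / real (card (walls d E i)))\<bar>
                   + ?r i * \<bar>real (card ?T) / real (card (walls d E i)) - (\<Prod>j\<in>{1..d} - {i}. ?r j)\<bar>"
    by (rule abs_diff_mult_le) simp
  finally show ?thesis
    unfolding bdisc_def hdisc_def
    using card_bip_edges[OF assms(2,5)] card_bip_edges_Times_walls[OF assms(2,5)] by simp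
qed

end
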